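(* In the standing setting, define $g^v$ for $t\in\{1,\dots,\overline R\}$, $k\in\{0,\dots,m\}$, $\delta\in\{0,\dots,N\}$ by $g^v(t,k,\delta)=v(k)-kp_{t-1}$ if $k+\delta\le m$; $g^v(t,k,\delta)=\max_{0\le u\le k\wedge\sigma^v(t)}\sum_{\delta'}K_t(\delta'\mid\delta)\,g^v(t+1,u,\delta')$ if $t<\overline R$ and $k+\delta>m$; $g^v(t,k,\delta)=0$ if $t=\overline R$ and $k+\delta>m$; and $g^v(0,k)=\max_{0\le u\le k}\sum_{\delta'}\mathbb P(\delta(p_0)=\delta')\,g^v(1,u,\delta')$. Then $\varphi^v(0,k)=g^v(0,k)$ for all $k\in\{0,\dots,m\}$, and for all $t\in\{1,\dots,\overline R\}$, $k\in\{0,\dots,m\}$, $\delta\in\{0,\dots,N\}$, $$\varphi^v(t,k,\delta)\le g^v\big(t,k\wedge\sigma^v(t-1),\delta\big)\le\varphi^v\big(t,k\wedge\sigma^v(t-1),\delta\big).$$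
   Context: Standing setting. Integers $n\ge2$, $m\ge1$; $N:=(n-1)m$. Reals $p_{\mathrm{init}}\ge0$, $\Delta P>0$; the price at round $t\ge0$ is $p_t:=p_{\mathrm{init}}+t\Delta P$. The player's valuation $v:\{0,\dots,m\}\to[0,\infty)$ satisfies $v(0)=0$ and is non-decreasing and concave. $\overline R:=\lceil (v(1)-p_{\mathrm{init}})/\Delta P\rceil$, assumed $\ge1$. For $t\ge0$, $\sigma^v(t):=\min\operatorname{argmax}_{0\le u\le m}(v(u)-up_t)$. The opponent is given by random variables $Z_1\ge Z_2\ge\dots\ge Z_N\ge0$ (a.s.) on a probability space $(\Omega,\mathcal F,\mathbb P)$; its demand at price $p$ is $\delta(p):=\sum_{j=1}^N\mathbf 1\{Z_j>p\}$. For $t\ge1$ fix transition kernels $K_t(\delta'\mid\delta)$ ($\delta,\delta'\in\{0,\dots,N\}$), each $K_t(\cdot\mid\delta)$ a probability on $\{0,\dots,\delta\}$, with $K_t(\delta'\mid\delta)=\mathbb P(\delta(p_t)=\delta'\mid\delta(p_{t-1})=\delta)$ whenever $\mathbb P(\delta(p_{t-1})=\delta)>0$. Value function: for $t\in\{1,\dots,\overline R\}$, $k\in\{0,\dots,m\}$, $\delta\in\{0,\dots,N\}$: $\varphi^v(t,k,\delta):=v(k)-kp_{t-1}$ if $k+\delta\le m$; $:=\max_{0\le u\le k}\sum_{\delta'=0}^N K_t(\delta'\mid\delta)\varphi^v(t+1,u,\delta')$ if $k+\delta>m$ and $t<\overline R$; $:=0$ if $k+\delta>m$ and $t=\overline R$.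 Also $\varphi^v(0,k):=\max_{0\le u\le k}\sum_{\delta'}\mathbb P(\delta(p_0)=\delta')\varphi^v(1,u,\delta')$. $a\wedge b:=\min(a,b)$. *)

theory Defs
  imports "HOL-Probability.Probability"
begin

definition opp_demand :: "(nat \<Rightarrow> 'a \<Rightarrow> real) \<Rightarrow> nat \<Rightarrow> real \<Rightarrow> 'a \<Rightarrow> nat" where
  "opp_demand Z N q \<omega> = (\<Sum>j\<in>{1..N}. of_bool (Z j \<omega> > q))"

definition sigma_v :: "(nat \<Rightarrow> real) \<Rightarrow> (nat \<Rightarrow> real) \<Rightarrow> nat \<Rightarrow> nat \<Rightarrow> nat" where
  "sigma_v v p m t = Min {u \<in> {0..m}. \<forall>w \<in> {0..m}. v w - real w * p t \<le> v u - real u * p t}"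

text \<open>Value function phi^v(t,k,delta), t in 1..R. K t d' d stands for K_t(d' | d).\<close>
function phi_v :: "(nat \<Rightarrow> nat \<Rightarrow> nat \<Rightarrow> real) \<Rightarrow> (nat \<Rightarrow> real) \<Rightarrow> (nat \<Rightarrow> real)
    \<Rightarrow> nat \<Rightarrow> nat \<Rightarrow> nat \<Rightarrow> nat \<Rightarrow> nat \<Rightarrow> nat \<Rightarrow> real" where
  "phi_v K p v m N R t k d =
    (if k + d \<le> m then v k - real k * p (t - 1)
     else if t < R then Max ((\<lambda>u. \<Sum>d'\<in>{0..N}. K t d' d * phi_v K p v m N R (t + 1) u d') ` {0..k})
     else 0)"
  by pat_completeness auto
termination
  by (relation "Wellfounded.measure (\<lambda>(K, p, v, m, N, R, t, k, d). R - t)") auto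

text \<open>phi^v(0,k); q d' stands for P(delta(p_0) = d').\<close>
definition phi0_v :: "(nat \<Rightarrow> nat \<Rightarrow> nat \<Rightarrow> real) \<Rightarrow> (nat \<Rightarrow> real) \<Rightarrow> (nat \<Rightarrow> real) \<Rightarrow> (nat \<Rightarrow> real)
    \<Rightarrow> nat \<Rightarrow> nat \<Rightarrow> nat \<Rightarrow> nat \<Rightarrow> real" where
  "phi0_v K q p v m N R k = Max ((\<lambda>u. \<Sum>d'\<in>{0..N}. q d' * phi_v K p v m N R 1 u d') ` {0..k})"

function g_v :: "(nat \<Rightarrow> nat \<Rightarrow> nat \<Rightarrow> real) \<Rightarrow> (nat \<Rightarrow> real) \<Rightarrow> (nat \<Rightarrow> real)
    \<Rightarrow> nat \<Rightarrow> nat \<Rightarrow> nat \<Rightarrow> nat \<Rightarrow> nat \<Rightarrow> nat \<Rightarrow> real" where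
  "g_v K p v m N R t k d =
    (if k + d \<le> m then v k - real k * p (t - 1)
     else if t < R then Max ((\<lambda>u. \<Sum>d'\<in>{0..N}. K t d' d * g_v K p v m N R (t + 1) u d')
                              ` {0..min k (sigma_v v p m t)})
     else 0)"
  by pat_completeness auto
termination
  by (relation "Wellfounded.measure (\<lambda>(K, p, v, m, N, R, t, k, d). R - t)") auto

definition g0_v :: "(nat \<Rightarrow> nat \<Rightarrow> nat \<Rightarrow> real) \<Rightarrow> (nat \<Rightarrow> real) \<Rightarrow> (nat \<Rightarrow> real) \<Rightarrow> (nat \<Rightarrow> real)
    \<Rightarrow> nat \<Rightarrow> nat \<Rightarrow> nat \<Rightarrow> nat \<Rightarrow> real" where
  "g0_v K q p v m N R k = Max ((\<lambda>u. \<Sum>d'\<in>{0..N}. q d' * g_v K p v m N R 1 u d') ` {0..k})"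

end

theory Submission
  imports Defs
begin

text \<open>
  When the auction clears in round \<open>t\<close> the player pays \<open>p\<^sub>t\<^sub>-\<^sub>1\<close> per unit, and prices only
  rise. Hence \<open>\<phi>\<^sup>v(t,k,\<delta>)\<close> never exceeds the best immediate payoff
  \<open>max\<^sub>u (v(u) - u p\<^sub>t\<^sub>-\<^sub>1)\<close>, attained at \<open>\<sigma>\<^sup>v(t-1)\<close>, so a demand above \<open>\<sigma>\<^sup>v(t-1)\<close> can be cut
  down to \<open>\<sigma>\<^sup>v(t-1)\<close> without loss. As \<open>\<sigma>\<^sup>v\<close> is non-increasing in \<open>t\<close>, these truncations are
  consistent from round to round, and backward induction over the rounds gives \<open>\<phi>\<^sup>v \<le> g\<^sup>v\<close> at
  the truncated demand; conversely \<open>g\<^sup>v \<le> \<phi>\<^sup>v\<close> because \<open>g\<^sup>v\<close> maximises over fewer choices.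
\<close>

declare phi_v.simps [simp del] g_v.simps [simp del]

definition myopic_payoff :: "(nat \<Rightarrow> real) \<Rightarrow> (nat \<Rightarrow> real) \<Rightarrow> nat \<Rightarrow> nat \<Rightarrow> real" where
  "myopic_payoff v p m t = v (sigma_v v p m t) - real (sigma_v v p m t) * p t"

lemma sigma_v_argmax:
  "sigma_v v p m t \<le> m \<and> (\<forall>w\<le>m. v w - real w * p t \<le> myopic_payoff v p m t)"
proof -
  let ?f = "\<lambda>w. v w - real w * p t"
  define S where "S = {u \<in> {0..m}. \<forall>w \<in> {0..m}. ?f w \<le> ?f u}"
  have "Max (?f ` {0..m}) \<in> ?f ` {0..m}"
    by (intro Max_in) auto
  then obtain u where "u \<in> {0..m}" "Max (?f ` {0..m}) = ?f u"
    by (rule imageE)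
  then have "u \<in> S"
    by (auto simp: S_def intro: Max_ge[THEN order.trans])
  then have "Min S \<in> S"
    by (intro Min_in) (auto simp: S_def)
  then show ?thesis
    by (auto simp: S_def sigma_v_def myopic_payoff_def)
qed

lemma sigma_v_le: "sigma_v v p m t \<le> m"
  using sigma_v_argmax by blast

lemma myopic_payoff_ge: "w \<le> m \<Longrightarrow> v w - real w * p t \<le> myopic_payoff v p m t"
  using sigma_v_argmax by blast

lemma myopic_payoff_nonneg: "v 0 = 0 \<Longrightarrow> 0 \<le> myopic_payoff v p m t"
  using myopic_payoff_ge[of 0 m v p t] by simp

lemma myopic_payoff_antimono:
  assumes "p s \<le> p t"
  shows "myopic_payoff v p m t \<le> myopic_payoff v p m s"
proof -
  let ?u = "sigma_v v p m t"
  have "myopic_payoff v p m t \<le> v ?u - real ?u * p s"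
    using assms by (simp add: myopic_payoff_def mult_left_mono)
  also have "\<dots> \<le> myopic_payoff v p m s"
    by (rule myopic_payoff_ge[OF sigma_v_le])
  finally show ?thesis .
qed

lemma sigma_v_antimono:
  assumes "p s \<le> p t"
  shows "sigma_v v p m t \<le> sigma_v v p m s"
proof (cases "p s = p t")
  case True
  then show ?thesis
    by (simp add: sigma_v_def)
next
  case False
  let ?a = "sigma_v v p m s" and ?b = "sigma_v v p m t"
  have opt_t: "v ?a - real ?a * p t \<le> v ?b - real ?b * p t"
    using myopic_payoff_ge[OF sigma_v_le] by (simp add: myopic_payoff_def)
  have opt_s: "v ?b - real ?b * p s \<le> v ?a - real ?a * p s"
    using myopic_payoff_ge[OF sigma_v_le] by (simp add: myopic_payoff_def)
  show ?thesis
  proof (rule ccontr)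
    assume "\<not> ?b \<le> ?a"
    then have "0 < (real ?b - real ?a) * (p t - p s)"
      using assms False by simp
    with opt_t opt_s show False
      by (simp add: algebra_simps)
  qed
qed

lemma phi_v_cleared: "k + d \<le> m \<Longrightarrow> phi_v K p v m N R t k d = v k - real k * p (t - 1)"
  by (simp add: phi_v.simps)

lemma phi_v_continue:
  "\<not> k + d \<le> m \<Longrightarrow> t < R \<Longrightarrow> phi_v K p v m N R t k d
     = Max ((\<lambda>u. \<Sum>d'\<in>{0..N}. K t d' d * phi_v K p v m N R (t + 1) u d') ` {0..k})"
  by (simp add: phi_v.simps)

lemma phi_v_deadline: "\<not> k + d \<le> m \<Longrightarrow> \<not> t < R \<Longrightarrow> phi_v K p v m N R t k d = 0"
  by (simp add: phi_v.simps)

lemma g_v_cleared: "k + d \<le> m \<Longrightarrow> g_v K p v m N R t k d = v k - real k * p (t - 1)"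
  by (simp add: g_v.simps)

lemma g_v_continue:
  "\<not> k + d \<le> m \<Longrightarrow> t < R \<Longrightarrow> g_v K p v m N R t k d
     = Max ((\<lambda>u. \<Sum>d'\<in>{0..N}. K t d' d * g_v K p v m N R (t + 1) u d')
              ` {0..min k (sigma_v v p m t)})"
  by (simp add: g_v.simps)

lemma g_v_deadline: "\<not> k + d \<le> m \<Longrightarrow> \<not> t < R \<Longrightarrow> g_v K p v m N R t k d = 0"
  by (simp add: g_v.simps)

lemma Max_weighted_sum_mono:
  fixes w :: "'d \<Rightarrow> real" and f :: "'a \<Rightarrow> 'd \<Rightarrow> real" and g :: "'b \<Rightarrow> 'd \<Rightarrow> real"
  assumes "finite A" "A \<noteq> {}" "finite B"
    and w_nonneg: "\<And>d. d \<in> D \<Longrightarrow> 0 \<le> w d"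
    and "h ` A \<subseteq> B"
    and dominated: "\<And>a d. a \<in> A \<Longrightarrow> d \<in> D \<Longrightarrow> f a d \<le> g (h a) d"
  shows "Max ((\<lambda>a. \<Sum>d\<in>D. w d * f a d) ` A) \<le> Max ((\<lambda>b. \<Sum>d\<in>D. w d * g b d) ` B)"
proof (subst Max_le_iff)
  show "\<forall>x\<in>(\<lambda>a. \<Sum>d\<in>D. w d * f a d) ` A. x \<le> Max ((\<lambda>b. \<Sum>d\<in>D. w d * g b d) ` B)"
  proof
    fix x assume "x \<in> (\<lambda>a. \<Sum>d\<in>D. w d * f a d) ` A"
    then obtain a where "a \<in> A" and x: "x = (\<Sum>d\<in>D. w d * f a d)"
      by blast
    have "x \<le> (\<Sum>d\<in>D. w d * g (h a) d)"
      unfolding x using \<open>a \<in> A\<close> dominated w_nonneg by (intro sum_mono mult_left_mono) auto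
    also have "\<dots> \<le> Max ((\<lambda>b. \<Sum>d\<in>D. w d * g b d) ` B)"
      using \<open>a \<in> A\<close> \<open>h ` A \<subseteq> B\<close> \<open>finite B\<close> by (intro Max_ge) auto
    finally show "x \<le> Max ((\<lambda>b. \<Sum>d\<in>D. w d * g b d) ` B)" .
  qed
qed (use assms in auto)

lemma Max_weighted_sum_le:
  fixes w :: "'d \<Rightarrow> real" and f :: "'a \<Rightarrow> 'd \<Rightarrow> real"
  assumes "finite A" "A \<noteq> {}"
    and w_nonneg: "\<And>d. d \<in> D \<Longrightarrow> 0 \<le> w d" and w_sum: "(\<Sum>d\<in>D. w d) = 1"
    and bound: "\<And>a d. a \<in> A \<Longrightarrow> d \<in> D \<Longrightarrow> f a d \<le> c"
  shows "Max ((\<lambda>a. \<Sum>d\<in>D. w d * f a d) ` A) \<le> c"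
proof -
  have "Max ((\<lambda>a. \<Sum>d\<in>D. w d * f a d) ` A) \<le> Max ((\<lambda>_. \<Sum>d\<in>D. w d * c) ` {()})"
    using assms by (intro Max_weighted_sum_mono[where h = "\<lambda>_. ()"]) auto
  also have "\<dots> = c"
    using w_sum by (simp add: sum_distrib_right[symmetric])
  finally show ?thesis .
qed

locale nonneg_kernels =
  fixes K :: "nat \<Rightarrow> nat \<Rightarrow> nat \<Rightarrow> real" and N :: nat
  assumes K_nonneg: "\<forall>t \<ge> 1. \<forall>d \<le> N. \<forall>d'. 0 \<le> K t d' d"
begin

lemma g_v_le_phi_v:
  "1 \<le> t \<Longrightarrow> d \<le> N \<Longrightarrow> g_v K p v m N R t k d \<le> phi_v K p v m N R t k d"
proof (induction "R - t" arbitrary: t k d rule: less_induct)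
  case less
  consider "k + d \<le> m" | "\<not> k + d \<le> m" "t < R" | "\<not> k + d \<le> m" "\<not> t < R"
    by blast
  then show ?case
  proof cases
    case 2
    have "g_v K p v m N R (t + 1) u d' \<le> phi_v K p v m N R (t + 1) u d'" if "d' \<le> N" for u d'
      using less(1)[of "t + 1" d' u] 2 that by simp
    then have "Max ((\<lambda>u. \<Sum>d'\<in>{0..N}. K t d' d * g_v K p v m N R (t + 1) u d')
              ` {0..min k (sigma_v v p m t)})
        \<le> Max ((\<lambda>u. \<Sum>d'\<in>{0..N}. K t d' d * phi_v K p v m N R (t + 1) u d') ` {0..k})"
      using less.prems K_nonneg by (intro Max_weighted_sum_mono[where h = id]) auto
    with 2 show ?thesis
      by (simp add: g_v_continue phi_v_continue)
  qed (simp_all add: g_v_cleared phi_v_cleared g_v_deadline phi_v_deadline)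
qed

end

locale rising_price_model = nonneg_kernels +
  fixes p :: "nat \<Rightarrow> real" and v :: "nat \<Rightarrow> real"
  assumes K_sum: "\<forall>t \<ge> 1. \<forall>d \<le> N. (\<Sum>d'\<in>{0..N}. K t d' d) = 1"
    and p_mono: "incseq p"
    and v0: "v 0 = 0"
begin

lemma sigma_v_step: "sigma_v v p m t \<le> sigma_v v p m (t - 1)"
  using p_mono by (intro sigma_v_antimono) (simp add: incseqD)

lemma myopic_payoff_step: "myopic_payoff v p m t \<le> myopic_payoff v p m (t - 1)"
  using p_mono by (intro myopic_payoff_antimono) (simp add: incseqD)

lemma phi_v_le_myopic_payoff:
  "1 \<le> t \<Longrightarrow> k \<le> m \<Longrightarrow> d \<le> N \<Longrightarrow> phi_v K p v m N R t k d \<le> myopic_payoff v p m (t - 1)"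
proof (induction "R - t" arbitrary: t k d rule: less_induct)
  case less
  consider "k + d \<le> m" | "\<not> k + d \<le> m" "t < R" | "\<not> k + d \<le> m" "\<not> t < R"
    by blast
  then show ?case
  proof cases
    case 1
    then show ?thesis
      using less.prems myopic_payoff_ge by (simp add: phi_v_cleared)
  next
    case 2
    have "phi_v K p v m N R (t + 1) u d' \<le> myopic_payoff v p m t" if "u \<le> k" "d' \<le> N" for u d'
      using less(1)[of "t + 1" u d'] less.prems 2 that by simp
    then have "Max ((\<lambda>u. \<Sum>d'\<in>{0..N}. K t d' d * phi_v K p v m N R (t + 1) u d') ` {0..k})
        \<le> myopic_payoff v p m t"
      using less.prems K_nonneg K_sum by (intro Max_weighted_sum_le) auto
    also have "\<dots> \<le> myopic_payoff v p m (t - 1)"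
      by (rule myopic_payoff_step)
    finally show ?thesis
      using 2 by (simp add: phi_v_continue)
  next
    case 3
    then show ?thesis
      using v0 by (simp add: phi_v_deadline myopic_payoff_nonneg)
  qed
qed

lemma phi_v_le_g_v_truncated:
  "1 \<le> t \<Longrightarrow> k \<le> m \<Longrightarrow> d \<le> N \<Longrightarrow>
    phi_v K p v m N R t k d \<le> g_v K p v m N R t (min k (sigma_v v p m (t - 1))) d"
proof (induction "R - t" arbitrary: t k d rule: less_induct)
  case less
  let ?k = "min k (sigma_v v p m (t - 1))"
  consider "?k + d \<le> m" "k \<le> sigma_v v p m (t - 1)"
    | "?k + d \<le> m" "?k = sigma_v v p m (t - 1)"
    | "\<not> k + d \<le> m" "\<not> ?k + d \<le> m" "t < R"
    | "\<not> k + d \<le> m" "\<not> ?k + d \<le> m" "\<not> t < R"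
    by linarith
  then show ?case
  proof cases
    case 1
    then show ?thesis
      by (simp add: phi_v_cleared g_v_cleared)
  next
    case 2
    then show ?thesis
      using phi_v_le_myopic_payoff[OF less.prems]
      by (simp add: g_v_cleared myopic_payoff_def)
  next
    case 3
    let ?trunc = "\<lambda>u. min u (sigma_v v p m t)"
    have "phi_v K p v m N R (t + 1) u d' \<le> g_v K p v m N R (t + 1) (?trunc u) d'"
      if "u \<le> k" "d' \<le> N" for u d'
      using less(1)[of "t + 1" u d'] less.prems 3 that by simp
    moreover have "?trunc ` {0..k} \<subseteq> {0..min ?k (sigma_v v p m t)}"
      using sigma_v_step[of m t] by auto
    ultimately have "Max ((\<lambda>u. \<Sum>d'\<in>{0..N}. K t d' d * phi_v K p v m N R (t + 1) u d') ` {0..k})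
        \<le> Max ((\<lambda>u. \<Sum>d'\<in>{0..N}. K t d' d * g_v K p v m N R (t + 1) u d')
                ` {0..min ?k (sigma_v v p m t)})"
      using less.prems K_nonneg by (intro Max_weighted_sum_mono[where h = ?trunc]) auto
    with 3 show ?thesis
      by (simp add: phi_v_continue g_v_continue)
  next
    case 4
    then show ?thesis
      by (simp add: phi_v_deadline g_v_deadline)
  qed
qed

lemma phi0_v_eq_g0_v:
  assumes q_nonneg: "\<And>d. 0 \<le> q d" and "k \<le> m"
  shows "phi0_v K q p v m N R k = g0_v K q p v m N R k"
  unfolding phi0_v_def g0_v_def
proof (rule antisym)
  show "Max ((\<lambda>u. \<Sum>d'\<in>{0..N}. q d' * phi_v K p v m N R 1 u d') ` {0..k})
      \<le> Max ((\<lambda>u. \<Sum>d'\<in>{0..N}. q d' * g_v K p v m N R 1 u d') ` {0..k})"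
    using phi_v_le_g_v_truncated[of 1] q_nonneg \<open>k \<le> m\<close>
    by (intro Max_weighted_sum_mono[where h = "\<lambda>u. min u (sigma_v v p m 0)"]) auto
  show "Max ((\<lambda>u. \<Sum>d'\<in>{0..N}. q d' * g_v K p v m N R 1 u d') ` {0..k})
      \<le> Max ((\<lambda>u. \<Sum>d'\<in>{0..N}. q d' * phi_v K p v m N R 1 u d') ` {0..k})"
    using g_v_le_phi_v[of 1] q_nonneg by (intro Max_weighted_sum_mono[where h = id]) auto
qed

end

theorem mainTheorem10:
  fixes n m N :: nat and p_init dP :: real and v :: "nat \<Rightarrow> real"
    and M :: "'a measure" and Z :: "nat \<Rightarrow> 'a \<Rightarrow> real"
    and K :: "nat \<Rightarrow> nat \<Rightarrow> nat \<Rightarrow> real"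
    and p :: "nat \<Rightarrow> real" and R :: nat and q :: "nat \<Rightarrow> real"
  assumes n2: "n \<ge> 2" and m1: "m \<ge> 1" and N_def: "N = (n - 1) * m"
    and pinit: "p_init \<ge> 0" and dP: "dP > 0"
    and p_def: "p = (\<lambda>t. p_init + real t * dP)"
    and v0: "v 0 = 0"
    and v_nonneg: "\<forall>i \<le> m. v i \<ge> 0"
    and v_mono: "\<forall>i j. i \<le> j \<and> j \<le> m \<longrightarrow> v i \<le> v j"
    and v_concave: "\<forall>i. 1 \<le> i \<and> i + 1 \<le> m \<longrightarrow> v (i + 1) - v i \<le> v i - v (i - 1)"
    and R_ge: "\<lceil>(v 1 - p_init) / dP\<rceil> \<ge> 1"
    and R_def: "R = nat \<lceil>(v 1 - p_init) / dP\<rceil>"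
    and M_prob: "prob_space M"
    and Z_meas: "\<forall>j \<in> {1..N}. Z j \<in> borel_measurable M"
    and Z_ord: "AE \<omega> in M. (\<forall>j. 1 \<le> j \<and> j < N \<longrightarrow> Z (j + 1) \<omega> \<le> Z j \<omega>) \<and> Z N \<omega> \<ge> 0"
    and K_nonneg: "\<forall>t \<ge> 1. \<forall>d \<le> N. \<forall>d'. K t d' d \<ge> 0"
    and K_supp: "\<forall>t \<ge> 1. \<forall>d \<le> N. \<forall>d'. d < d' \<longrightarrow> K t d' d = 0"
    and K_sum: "\<forall>t \<ge> 1. \<forall>d \<le> N. (\<Sum>d'\<in>{0..d}. K t d' d) = 1"
    and K_cond: "\<forall>t \<ge> 1. \<forall>d \<le> N. \<forall>d' \<le> N.
        measure M {\<omega> \<in> space M. opp_demand Z N (p (t - 1)) \<omega> = d} > 0 \<longrightarrow>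
        K t d' d = measure M {\<omega> \<in> space M. opp_demand Z N (p t) \<omega> = d' \<and> opp_demand Z N (p (t - 1)) \<omega> = d}
                   / measure M {\<omega> \<in> space M. opp_demand Z N (p (t - 1)) \<omega> = d}"
    and q_def: "q = (\<lambda>d'. measure M {\<omega> \<in> space M. opp_demand Z N (p 0) \<omega> = d'})"
  shows "(\<forall>k \<le> m. phi0_v K q p v m N R k = g0_v K q p v m N R k) \<and>
         (\<forall>t \<in> {1..R}. \<forall>k \<le> m. \<forall>d \<le> N.
            phi_v K p v m N R t k d \<le> g_v K p v m N R t (min k (sigma_v v p m (t - 1))) d \<and>
            g_v K p v m N R t (min k (sigma_v v p m (t - 1))) d
              \<le> phi_v K p v m N R t (min k (sigma_v v p m (t - 1))) d)"
proof -
  have K_sum_N: "\<forall>t \<ge> 1. \<forall>d \<le> N. (\<Sum>d'\<in>{0..N}. K t d' d) = 1"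
  proof (intro allI impI)
    fix t d :: nat assume "1 \<le> t" "d \<le> N"
    then have "(\<Sum>d'\<in>{0..N}. K t d' d) = (\<Sum>d'\<in>{0..d}. K t d' d)"
      using K_supp by (intro sum.mono_neutral_right) auto
    with K_sum \<open>1 \<le> t\<close> \<open>d \<le> N\<close> show "(\<Sum>d'\<in>{0..N}. K t d' d) = 1"
      by simp
  qed
  have "incseq p"
    using dP by (simp add: p_def incseq_SucI)
  then interpret rising_price_model K N p v
    using K_nonneg K_sum_N v0 by unfold_locales
  have "phi0_v K q p v m N R k = g0_v K q p v m N R k" if "k \<le> m" for k
    using that by (intro phi0_v_eq_g0_v) (simp add: q_def)
  with phi_v_le_g_v_truncated g_v_le_phi_v show ?thesis
    by auto
qed

end
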